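(* Let $\mathcal A$ be the one-dimensional piecewise quadratic collocation matrix (defined in the context) associated with $a<b$, $\gamma\in(0,1)$ and $M\ge2$. Then its $\infty$-norm condition number satisfies $$\kappa_\infty(\mathcal A)=\|\mathcal A\|_\infty\|\mathcal A^{-1}\|_\infty=\mathcal O(M),$$ i.e. there is a constant $C$ depending only on $a,b,\gamma$ such that $\kappa_\infty(\mathcal A)\le CM$ for all $M\ge2$.
   Context: Fix real numbers $a<b$, an exponent $\gamma\in(0,1)$ and an integer $M\ge 2$. Set $h=(b-a)/M$ and $x_s=a+sh$ for $s\in\{0,\tfrac12,1,\tfrac32,\dots,M\}$. The piecewise quadratic Lagrange basis functions on $[a,b]$ are: for integers $0\le l\le M$, $\phi_l(x)=\frac{x-x_{l-1}}{h}\cdot\frac{2x-(x_l+x_{l-1})}{h}$ for $x\in[x_{l-1},x_l]\cap[a,b]$, $\phi_l(x)=\frac{x_{l+1}-x}{h}\cdot\frac{(x_{l+1}+x_l)-2x}{h}$ for $x\in[x_l,x_{l+1}]\cap[a,b]$, and $\phi_l(x)=0$ otherwise; and for $l=1,\dots,M$, $\phi_{l-\frac12}(x)=\frac{4(x-x_{l-1})(x_l-x)}{h^2}$ for $x\in[x_{l-1},x_l]$ and $0$ otherwise. For $i\in\{1,\dots,2M-1\}$ and $j\in\{0,1,\dots,2M\}$ define $$d_i=\int_a^b\frac{dy}{|x_{i/2}-y|^{\gamma}},\qquad g_{ij}=\int_a^b\frac{\phi_{j/2}(y)}{|x_{i/2}-y|^{\gamma}}\,dy .$$ The one-dimensional collocation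 matrix is the $(2M-1)\times(2M-1)$ matrix $\mathcal A$ with entries $A_{ij}=\delta_{ij}d_i-g_{ij}$, $i,j\in\{1,\dots,2M-1\}$. The following fact, established in earlier work, may be used: $g_{ij}>0$ for all $i,j\in\{1,\dots,2M-1\}$, and $\mathcal A$ is strictly diagonally dominant by rows (in particular invertible). $\|\cdot\|_\infty$ denotes the matrix norm induced by the maximum norm. *)

theory Defs
  imports "HOL-Analysis.Analysis" "Jordan_Normal_Form.Matrix"
begin

text \<open>Grid points with doubled index: xgrid a b M k = x_(k/2) = a + (k/2) h, h = (b-a)/M.\<close>
definition xgrid :: "real \<Rightarrow> real \<Rightarrow> nat \<Rightarrow> nat \<Rightarrow> real" where
  "xgrid a b M k = a + (real k / 2) * ((b - a) / real M)"

text \<open>Piecewise quadratic Lagrange basis function phi_(j/2), doubled index j.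
  Even j = 2l: nodal function phi_l; odd j = 2l-1: midpoint function phi_(l-1/2).\<close>
definition phi :: "real \<Rightarrow> real \<Rightarrow> nat \<Rightarrow> nat \<Rightarrow> real \<Rightarrow> real" where
  "phi a b M j x =
    (let h = (b - a) / real M; X = xgrid a b M in
     if even j then
       (let l = j div 2 in
        if 1 \<le> l \<and> X (2*l - 2) \<le> x \<and> x \<le> X (2*l) \<and> a \<le> x \<and> x \<le> b then
          (x - X (2*l - 2)) / h * ((2*x - (X (2*l) + X (2*l - 2))) / h)
        else if l < M \<and> X (2*l) \<le> x \<and> x \<le> X (2*l + 2) \<and> a \<le> x \<and> x \<le> b then
          (X (2*l + 2) - x) / h * (((X (2*l + 2) + X (2*l)) - 2*x) / h)
        else 0)
     else
       (let l = (j + 1) div 2 in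
        if X (2*l - 2) \<le> x \<and> x \<le> X (2*l) then
          4 * (x - X (2*l - 2)) * (X (2*l) - x) / h^2
        else 0))"

definition dcoef :: "real \<Rightarrow> real \<Rightarrow> real \<Rightarrow> nat \<Rightarrow> nat \<Rightarrow> real" where
  "dcoef a b \<gamma> M i = integral {a..b} (\<lambda>y. 1 / \<bar>xgrid a b M i - y\<bar> powr \<gamma>)"

definition gcoef :: "real \<Rightarrow> real \<Rightarrow> real \<Rightarrow> nat \<Rightarrow> nat \<Rightarrow> nat \<Rightarrow> real" where
  "gcoef a b \<gamma> M i j = integral {a..b} (\<lambda>y. phi a b M j y / \<bar>xgrid a b M i - y\<bar> powr \<gamma>)"

text \<open>Collocation matrix, (2M-1)x(2M-1); row/column r (0-based) corresponds to index r+1.\<close>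
definition colloc_mat :: "real \<Rightarrow> real \<Rightarrow> real \<Rightarrow> nat \<Rightarrow> real mat" where
  "colloc_mat a b \<gamma> M = mat (2*M - 1) (2*M - 1)
     (\<lambda>(r, c). (if r = c then dcoef a b \<gamma> M (r+1) else 0) - gcoef a b \<gamma> M (r+1) (c+1))"

definition norm_inf_mat :: "real mat \<Rightarrow> real" where
  "norm_inf_mat A = Max {(\<Sum>c<dim_col A. \<bar>A $$ (r, c)\<bar>) | r. r < dim_row A}"

definition inverse_mat :: "real mat \<Rightarrow> real mat" where
  "inverse_mat A = (SOME B. B \<in> carrier_mat (dim_row A) (dim_row A) \<and> A * B = 1\<^sub>m (dim_row A)
                        \<and> B * A = 1\<^sub>m (dim_row A))"

definition cond_inf :: "real mat \<Rightarrow> real" where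
  "cond_inf A = norm_inf_mat A * norm_inf_mat (inverse_mat A)"

end

theory Submission
  imports Defs "Jordan_Normal_Form.Determinant"
begin

text \<open>
  In reference coordinates \<open>t = (y - a) / h\<close> every entry of the matrix is \<open>h^(1-\<gamma>)\<close> times
  an integral over \<open>[0, M]\<close> of a reference basis function against \<open>|i/2 - t|^(-\<gamma>)\<close>.
  The bubble functions are nonnegative. A nodal function contributes on each element a moment
  \<open>\<integral>\<^sub>0\<^sup>1 (1 - u) (1 - 2u) |w - u|^(-\<gamma>) du\<close> at a half-integer point \<open>w\<close>; averaging over
  \<open>u \<mapsto> 1 - u\<close> shows that this moment is nonnegative, and at least \<open>c\<^sub>\<gamma> V^(-\<gamma>)\<close> when
  \<open>1 \<le> w \<le> V\<close>. As the basis functions sum to one, every row is diagonally dominant with margin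
  \<open>g(i,0) + g(i,2M) \<ge> c\<^sub>\<gamma> h^(1-\<gamma>) M^(-\<gamma>)\<close>, while its absolute row sum is at most
  \<open>2 d(i) \<le> 4 h^(1-\<gamma>) M^(1-\<gamma>) / (1 - \<gamma>)\<close>. Diagonal dominance with margin \<open>\<delta>\<close> bounds the
  norm of the inverse by \<open>1/\<delta>\<close>, so the condition number is at most \<open>4 M / ((1 - \<gamma>) c\<^sub>\<gamma>)\<close>.
\<close>

unbundle no vec_syntax

section \<open>The weakly singular kernel and the quadratic profile\<close>

definition ws_kernel :: "real \<Rightarrow> real \<Rightarrow> real" where
  "ws_kernel \<gamma> t = 1 / \<bar>t\<bar> powr \<gamma>"

lemma ws_kernel_nonneg: "0 \<le> ws_kernel \<gamma> t"
  by (simp add: ws_kernel_def)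

lemma ws_kernel_minus [simp]: "ws_kernel \<gamma> (- t) = ws_kernel \<gamma> t"
  by (simp add: ws_kernel_def)

lemma ws_kernel_mult: "ws_kernel \<gamma> (s * t) = ws_kernel \<gamma> s * ws_kernel \<gamma> t"
  by (simp add: ws_kernel_def abs_mult powr_mult)

lemma ws_kernel_antimono:
  assumes "0 < s" "s \<le> t" "0 \<le> \<gamma>"
  shows "ws_kernel \<gamma> t \<le> ws_kernel \<gamma> s"
  using assms by (simp add: ws_kernel_def divide_left_mono powr_mono2)

lemma ws_kernel_ratio_le:
  fixes u w \<gamma> :: real
  assumes u: "0 < u" "u \<le> 1/2" and w: "1 \<le> w" and \<gamma>: "0 \<le> \<gamma>"
  shows "u * ws_kernel \<gamma> (w - 1 + u)
           \<le> (u / (1 - u)) powr (1 - \<gamma>) * ((1 - u) * ws_kernel \<gamma> (w - u))"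
proof -
  define r where "r = u / (1 - u)"
  have r: "0 < r" using u by (simp add: r_def)
  have pos: "0 < w - 1 + u" "0 < w - u" using u w by auto
  have "ws_kernel \<gamma> (w - 1 + u) = ((w - u) / (w - 1 + u)) powr \<gamma> * ws_kernel \<gamma> (w - u)"
    using pos by (simp add: ws_kernel_def powr_divide)
  also have "\<dots> \<le> (1 / r) powr \<gamma> * ws_kernel \<gamma> (w - u)"
  proof (intro mult_right_mono powr_mono2 ws_kernel_nonneg)
    have "(1 - u) * (w - 1 + u) - u * (w - u) = (1 - 2 * u) * (w - 1)"
      by (simp add: algebra_simps)
    moreover have "0 \<le> (1 - 2 * u) * (w - 1)" using u w by simp
    ultimately show "(w - u) / (w - 1 + u) \<le> 1 / r"
      using u pos by (simp add: r_def divide_simps algebra_simps)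
  qed (use \<gamma> pos r in auto)
  finally have "u * ws_kernel \<gamma> (w - 1 + u) \<le> u * (1 / r) powr \<gamma> * ws_kernel \<gamma> (w - u)"
    using u by (simp add: mult.assoc mult_left_mono)
  also have "u * (1 / r) powr \<gamma> = r powr (1 - \<gamma>) * (1 - u)"
  proof -
    have "u = r powr 1 * (1 - u)" using u r by (simp add: r_def)
    then show ?thesis
      using r by (simp add: powr_divide powr_diff field_simps)
  qed
  finally show ?thesis by (simp add: r_def mult.assoc)
qed

definition quad_profile :: "real \<Rightarrow> real" where
  "quad_profile u = (1 - u) * (1 - 2 * u)"

lemma abs_quad_profile_le: "0 \<le> u \<Longrightarrow> u \<le> 1 \<Longrightarrow> \<bar>quad_profile u\<bar> \<le> 1"
  using mult_mono[of "1 - u" 1 "\<bar>1 - 2 * u\<bar>" 1] by (auto simp: quad_profile_def abs_mult)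

text \<open>Symmetrization under \<open>u \<mapsto> 1 - u\<close> of the integrand of \<open>profile_moment\<close> below.\<close>
definition profile_sym :: "real \<Rightarrow> real \<Rightarrow> real \<Rightarrow> real" where
  "profile_sym \<gamma> w u =
     quad_profile u * ws_kernel \<gamma> (w - u) + quad_profile (1 - u) * ws_kernel \<gamma> (w - (1 - u))"

lemma profile_sym_eq:
  "profile_sym \<gamma> w u
     = (1 - 2 * u) * ((1 - u) * ws_kernel \<gamma> (w - u) - u * ws_kernel \<gamma> (w - 1 + u))"
  by (simp add: profile_sym_def quad_profile_def algebra_simps)

lemma ws_kernel_weighted_le:
  fixes u w \<gamma> :: real
  assumes u: "0 \<le> u" "u \<le> 1/2" and w: "w \<le> 0 \<or> w = 1/2 \<or> 1 \<le> w" and \<gamma>: "0 \<le> \<gamma>" "\<gamma> \<le> 1"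
  shows "u * ws_kernel \<gamma> (w - 1 + u) \<le> (1 - u) * ws_kernel \<gamma> (w - u)"
proof (cases "u = 0")
  case False
  then have u0: "0 < u" using u by simp
  consider "w \<le> 0" | "w = 1/2" | "1 \<le> w" using w by blast
  then show ?thesis
  proof cases
    case 1
    have "w - 1 + u = - (1 - u - w)" "w - u = - (u - w)" by simp_all
    then have "ws_kernel \<gamma> (w - 1 + u) \<le> ws_kernel \<gamma> (w - u)"
      using ws_kernel_antimono[of "u - w" "1 - u - w" \<gamma>] 1 u0 u \<gamma>
      by (simp only: ws_kernel_minus)
    then show ?thesis using u by (intro mult_mono) (auto simp: ws_kernel_nonneg)
  next
    case 2
    then have "w - 1 + u = - (w - u)" by simp
    then have "ws_kernel \<gamma> (w - 1 + u) = ws_kernel \<gamma> (w - u)"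
      by (simp only: ws_kernel_minus)
    then show ?thesis using u by (simp add: mult_right_mono ws_kernel_nonneg)
  next
    case 3
    have "(u / (1 - u)) powr (1 - \<gamma>) \<le> 1"
      using u \<gamma> by (intro powr_le1) (auto simp: divide_simps)
    then have "(u / (1 - u)) powr (1 - \<gamma>) * ((1 - u) * ws_kernel \<gamma> (w - u))
        \<le> (1 - u) * ws_kernel \<gamma> (w - u)"
      using u by (intro mult_left_le_one_le) (auto simp: ws_kernel_nonneg)
    then show ?thesis using ws_kernel_ratio_le[OF u0 u(2) 3 \<gamma>(1)] by linarith
  qed
qed (simp add: ws_kernel_nonneg)

lemma profile_sym_nonneg:
  fixes u w \<gamma> :: real
  assumes u: "0 \<le> u" "u \<le> 1" and w: "w \<le> 0 \<or> w = 1/2 \<or> 1 \<le> w" and \<gamma>: "0 \<le> \<gamma>" "\<gamma> \<le> 1"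
  shows "0 \<le> profile_sym \<gamma> w u"
proof -
  have half: "0 \<le> profile_sym \<gamma> w u"
    if "0 \<le> u" "u \<le> 1/2" for u
    unfolding profile_sym_eq using ws_kernel_weighted_le[OF that w \<gamma>] that by simp
  show ?thesis
  proof (cases "u \<le> 1/2")
    case False
    then show ?thesis using half[of "1 - u"] u by (simp add: profile_sym_def add.commute)
  qed (use half u in auto)
qed

lemma profile_sym_lower:
  fixes u w V \<gamma> :: real
  assumes u: "0 \<le> u" "u \<le> 1/4" and w: "1 \<le> w" "w \<le> V" and \<gamma>: "0 < \<gamma>" "\<gamma> < 1"
  shows "3/8 * (1 - (1/3) powr (1 - \<gamma>)) * ws_kernel \<gamma> V
           \<le> profile_sym \<gamma> w u"
proof -
  define \<theta> where "\<theta> = (1/3 :: real) powr (1 - \<gamma>)"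
  define K where "K = (1 - u) * ws_kernel \<gamma> (w - u)"
  have K: "0 \<le> K" using u by (simp add: K_def ws_kernel_nonneg)
  have "u * ws_kernel \<gamma> (w - 1 + u) \<le> \<theta> * K"
  proof (cases "u = 0")
    case False
    have "(u / (1 - u)) powr (1 - \<gamma>) \<le> \<theta>"
      unfolding \<theta>_def using u False \<gamma> by (intro powr_mono2) (auto simp: divide_simps)
    then have "(u / (1 - u)) powr (1 - \<gamma>) * K \<le> \<theta> * K"
      using K by (rule mult_right_mono)
    then show ?thesis
      using ws_kernel_ratio_le[of u w \<gamma>] u w \<gamma> False unfolding K_def by linarith
  qed (simp add: \<theta>_def K)
  then have "(1 - 2 * u) * ((1 - \<theta>) * K)
      \<le> (1 - 2 * u) * ((1 - u) * ws_kernel \<gamma> (w - u) - u * ws_kernel \<gamma> (w - 1 + u))"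
    using u by (intro mult_left_mono) (auto simp: K_def algebra_simps)
  moreover have "3/8 * (1 - \<theta>) * ws_kernel \<gamma> V \<le> (1 - 2 * u) * ((1 - \<theta>) * K)"
  proof -
    have "ws_kernel \<gamma> V \<le> ws_kernel \<gamma> (w - u)"
      using u w \<gamma> by (intro ws_kernel_antimono) auto
    moreover have "3/8 \<le> (1 - 2 * u) * (1 - u)"
      using mult_mono[of "1/2" "1 - 2 * u" "3/4" "1 - u"] u by simp
    ultimately have "3/8 * ws_kernel \<gamma> V \<le> ((1 - 2 * u) * (1 - u)) * ws_kernel \<gamma> (w - u)"
      by (intro mult_mono) (auto simp: ws_kernel_nonneg)
    then have "3/8 * ws_kernel \<gamma> V \<le> (1 - 2 * u) * K"
      by (simp add: K_def mult.assoc)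
    moreover have "0 \<le> 1 - \<theta>" using \<gamma> by (simp add: \<theta>_def powr01_less_one less_imp_le)
    ultimately show ?thesis
      using mult_left_mono[of "3/8 * ws_kernel \<gamma> V" "(1 - 2 * u) * K" "1 - \<theta>"]
      by (simp add: algebra_simps)
  qed
  ultimately show ?thesis unfolding profile_sym_eq \<theta>_def by linarith
qed

lemma has_integral_reflect_Icc:
  fixes f :: "real \<Rightarrow> real"
  assumes "(f has_integral I) {c..d}"
  shows "((\<lambda>t. f (c + d - t)) has_integral I) {c..d}"
proof -
  have "((f \<circ> (+) (c + d)) has_integral I) {-d..-c}"
    using has_integral_shift_Icc_real[of f "c + d" I "-d" "-c"] assms by simp
  then have "((\<lambda>t. (f \<circ> (+) (c + d)) (- t)) has_integral I) {- (- c)..- (- d)}"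
    using has_integral_reflect_real[of "f \<circ> (+) (c + d)" I "-c" "-d"] by simp
  then show ?thesis by (simp add: o_def)
qed

lemma ws_kernel_has_integral_right:
  assumes \<gamma>: "0 < \<gamma>" "\<gamma> < 1" and "v \<le> d"
  shows "((\<lambda>t. ws_kernel \<gamma> (v - t)) has_integral (d - v) powr (1 - \<gamma>) / (1 - \<gamma>)) {v..d}"
proof -
  have "((\<lambda>s. s powr (- \<gamma>)) has_integral (d - v) powr (- \<gamma> + 1) / (- \<gamma> + 1)) {0..d - v}"
    using assms by (intro has_integral_powr_from_0) auto
  then have "(((\<lambda>t. (t - v) powr (- \<gamma>)) \<circ> (+) v)
      has_integral (d - v) powr (1 - \<gamma>) / (1 - \<gamma>)) {0..d - v}"
    by (simp add: o_def)
  then have I: "((\<lambda>t. (t - v) powr (- \<gamma>)) has_integral (d - v) powr (1 - \<gamma>) / (1 - \<gamma>)) {v..d}"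
    using has_integral_shift_Icc_real[of "\<lambda>t. (t - v) powr (- \<gamma>)" v _ 0 "d - v"] by simp
  have eq: "ws_kernel \<gamma> (v - t) = (t - v) powr (- \<gamma>)" if "t \<in> {v..d}" for t
  proof -
    have "\<bar>v - t\<bar> = t - v" using that by simp
    then show ?thesis by (simp add: ws_kernel_def powr_minus_divide)
  qed
  show ?thesis by (rule has_integral_cong[THEN iffD2, OF eq I])
qed

lemma ws_kernel_has_integral:
  assumes \<gamma>: "0 < \<gamma>" "\<gamma> < 1" and v: "c \<le> v" "v \<le> d"
  shows "((\<lambda>t. ws_kernel \<gamma> (v - t))
           has_integral ((v - c) powr (1 - \<gamma>) + (d - v) powr (1 - \<gamma>)) / (1 - \<gamma>)) {c..d}"
proof -
  have "((\<lambda>t. ws_kernel \<gamma> (c - (c + v - t))) has_integral (v - c) powr (1 - \<gamma>) / (1 - \<gamma>)) {c..v}"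
    by (rule has_integral_reflect_Icc[OF ws_kernel_has_integral_right[OF \<gamma> v(1)]])
  moreover have "ws_kernel \<gamma> (c - (c + v - t)) = ws_kernel \<gamma> (v - t)" for t
    using ws_kernel_minus[of \<gamma> "v - t"] by simp
  ultimately have "((\<lambda>t. ws_kernel \<gamma> (v - t)) has_integral (v - c) powr (1 - \<gamma>) / (1 - \<gamma>)) {c..v}"
    by simp
  from has_integral_combine[OF v this ws_kernel_has_integral_right[OF \<gamma> v(2)]]
  show ?thesis by (simp add: add_divide_distrib)
qed

lemma ws_kernel_integrable:
  assumes "0 < \<gamma>" "\<gamma> < 1"
  shows "(\<lambda>t. ws_kernel \<gamma> (v - t)) integrable_on {c..d}"
proof -
  have "(\<lambda>t. ws_kernel \<gamma> (v - t)) integrable_on {min c v..max d v}"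
    using ws_kernel_has_integral[OF assms, of "min c v" v "max d v"] by auto
  then show ?thesis by (rule integrable_on_subinterval) auto
qed

lemma ws_kernel_integral_le:
  assumes \<gamma>: "0 < \<gamma>" "\<gamma> < 1" and v: "c \<le> v" "v \<le> d"
  shows "integral {c..d} (\<lambda>t. ws_kernel \<gamma> (v - t)) \<le> 2 * (d - c) powr (1 - \<gamma>) / (1 - \<gamma>)"
proof -
  have "(v - c) powr (1 - \<gamma>) \<le> (d - c) powr (1 - \<gamma>)" "(d - v) powr (1 - \<gamma>) \<le> (d - c) powr (1 - \<gamma>)"
    using \<gamma> v by (auto intro: powr_mono2)
  then show ?thesis
    using integral_unique[OF ws_kernel_has_integral[OF \<gamma> v]] \<gamma> by (simp add: divide_right_mono)
qed

lemma bounded_mult_ws_kernel_integrable: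
  fixes g :: "real \<Rightarrow> real"
  assumes \<gamma>: "0 < \<gamma>" "\<gamma> < 1" and g: "g \<in> borel_measurable borel" "\<And>t. t \<in> {c..d} \<Longrightarrow> \<bar>g t\<bar> \<le> B"
  shows "(\<lambda>t. g t * ws_kernel \<gamma> (v - t)) integrable_on {c..d}"
proof (rule measurable_bounded_by_integrable_imp_integrable_real)
  have "(\<lambda>t. g t * ws_kernel \<gamma> (v - t)) \<in> borel_measurable borel"
    using g(1) unfolding ws_kernel_def by measurable
  then show "(\<lambda>t. g t * ws_kernel \<gamma> (v - t)) \<in> borel_measurable (lebesgue_on {c..d})"
    by (simp add: measurable_completion measurable_restrict_space1)
  show "(\<lambda>t. B * ws_kernel \<gamma> (v - t)) integrable_on {c..d}"
    using ws_kernel_integrable[OF \<gamma>] by (rule integrable_on_mult_right)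
  show "\<bar>g t * ws_kernel \<gamma> (v - t)\<bar> \<le> B * ws_kernel \<gamma> (v - t)" if "t \<in> {c..d}" for t
    using g(2)[OF that] by (simp add: abs_mult ws_kernel_nonneg mult_right_mono)
qed simp

definition profile_moment :: "real \<Rightarrow> real \<Rightarrow> real" where
  "profile_moment \<gamma> w = integral {0..1} (\<lambda>u. quad_profile u * ws_kernel \<gamma> (w - u))"

text \<open>The constant is \<open>profile_sym_lower\<close> integrated over \<open>[0, 1/4]\<close> and halved.\<close>
definition profile_moment_const :: "real \<Rightarrow> real" where
  "profile_moment_const \<gamma> = 3/64 * (1 - (1/3) powr (1 - \<gamma>))"

lemma profile_moment_const_pos: "0 < \<gamma> \<Longrightarrow> \<gamma> < 1 \<Longrightarrow> 0 < profile_moment_const \<gamma>"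
  by (simp add: profile_moment_const_def powr01_less_one)

lemma quad_profile_mult_ws_kernel_integrable:
  assumes "0 < \<gamma>" "\<gamma> < 1"
  shows "(\<lambda>u. quad_profile u * ws_kernel \<gamma> (w - u)) integrable_on {0..1}"
proof (rule bounded_mult_ws_kernel_integrable[OF assms])
  show "quad_profile \<in> borel_measurable borel"
    unfolding quad_profile_def by measurable
  show "\<bar>quad_profile u\<bar> \<le> 1" if "u \<in> {0..1}" for u
    using that by (simp add: abs_quad_profile_le)
qed

lemma has_integral_profile_sym:
  assumes "0 < \<gamma>" "\<gamma> < 1"
  shows "(profile_sym \<gamma> w has_integral 2 * profile_moment \<gamma> w) {0..1}"
proof -
  have I: "((\<lambda>u. quad_profile u * ws_kernel \<gamma> (w - u)) has_integral profile_moment \<gamma> w) {0..1}"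
    unfolding profile_moment_def
    using quad_profile_mult_ws_kernel_integrable[OF assms] by (rule integrable_integral)
  from has_integral_add[OF I has_integral_reflect_Icc[OF I]] show ?thesis
    by (simp add: profile_sym_def[abs_def])
qed

lemma profile_moment_nonneg:
  assumes \<gamma>: "0 < \<gamma>" "\<gamma> < 1" and w: "w \<le> 0 \<or> w = 1/2 \<or> 1 \<le> w"
  shows "0 \<le> profile_moment \<gamma> w"
  using has_integral_nonneg[OF has_integral_profile_sym[OF \<gamma>]] profile_sym_nonneg[OF _ _ w] \<gamma>
  by simp

lemma profile_moment_lower:
  assumes \<gamma>: "0 < \<gamma>" "\<gamma> < 1" and w: "1 \<le> w" "w \<le> V"
  shows "profile_moment_const \<gamma> * ws_kernel \<gamma> V \<le> profile_moment \<gamma> w"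
proof -
  let ?S = "profile_sym \<gamma> w"
  let ?c = "3/8 * (1 - (1/3) powr (1 - \<gamma>)) * ws_kernel \<gamma> V"
  have S: "(?S has_integral 2 * profile_moment \<gamma> w) {0..1}"
    by (rule has_integral_profile_sym[OF \<gamma>])
  then have S_int: "?S integrable_on {0..1/4}"
    by (intro integrable_on_subinterval[OF has_integral_integrable]) auto
  have "?c / 4 = integral {0..1/4} (\<lambda>u::real. ?c)" by simp
  also have "\<dots> \<le> integral {0..1/4} ?S"
    using profile_sym_lower[OF _ _ w \<gamma>] S_int by (intro integral_le) auto
  also have "\<dots> \<le> integral {0..1} ?S"
    using S S_int profile_sym_nonneg[OF _ _ _ less_imp_le less_imp_le, of _ w \<gamma>] \<gamma> w
    by (intro integral_subset_le) (auto intro: has_integral_integrable)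
  also have "\<dots> = 2 * profile_moment \<gamma> w" using S by (rule integral_unique)
  finally have "?c / 4 \<le> 2 * profile_moment \<gamma> w" .
  then show ?thesis unfolding profile_moment_const_def by linarith
qed

section \<open>Reference basis functions\<close>

definition nodal_shape :: "real \<Rightarrow> real" where
  "nodal_shape s = (if \<bar>s\<bar> \<le> 1 then quad_profile \<bar>s\<bar> else 0)"

definition bubble_shape :: "real \<Rightarrow> real" where
  "bubble_shape s = (if \<bar>s\<bar> \<le> 1/2 then 1 - 4 * s\<^sup>2 else 0)"

definition ref_basis :: "nat \<Rightarrow> real \<Rightarrow> real" where
  "ref_basis j t =
     (if even j then nodal_shape (t - real j / 2) else bubble_shape (t - real j / 2))"

lemma bubble_shape_bounds: "0 \<le> bubble_shape s \<and> bubble_shape s \<le> 1"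
proof -
  have "0 \<le> 1 - 4 * s\<^sup>2" if "\<bar>s\<bar> \<le> 1/2"
    using mult_mono[OF that that] by (simp add: power2_eq_square)
  then show ?thesis by (auto simp: bubble_shape_def)
qed

lemma abs_ref_basis_le: "\<bar>ref_basis j t\<bar> \<le> 1"
  using bubble_shape_bounds[of "t - real j / 2"]
  by (simp add: ref_basis_def nodal_shape_def abs_quad_profile_le)

lemma ref_basis_odd_nonneg: "odd j \<Longrightarrow> 0 \<le> ref_basis j t"
  by (simp add: ref_basis_def bubble_shape_bounds)

lemma ref_basis_borel: "ref_basis j \<in> borel_measurable borel"
  unfolding ref_basis_def nodal_shape_def bubble_shape_def quad_profile_def by measurable

lemma nodal_shape_eq_0: "1 \<le> \<bar>s\<bar> \<Longrightarrow> nodal_shape s = 0"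
  by (auto simp: nodal_shape_def quad_profile_def)

lemma bubble_shape_eq_0:
  assumes "1/2 \<le> \<bar>s\<bar>"
  shows "bubble_shape s = 0"
proof (cases "\<bar>s\<bar> = 1/2")
  case True
  then have "s\<^sup>2 = (1/2)\<^sup>2" by (metis power2_abs)
  then show ?thesis by (simp add: bubble_shape_def power2_eq_square)
qed (use assms in \<open>simp add: bubble_shape_def\<close>)

lemma ref_basis_even_eq: "ref_basis (2 * l) t = nodal_shape (t - real l)"
  by (simp add: ref_basis_def)

lemma ref_basis_eq_0:
  assumes t: "real k \<le> t" "t \<le> real k + 1" and j: "j \<notin> {2*k, 2*k+1, 2*k+2}"
  shows "ref_basis j t = 0"
proof (cases "even j")
  case True
  moreover have "j \<noteq> 2*k" "j \<noteq> 2*k + 2" using j by auto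
  ultimately have "j + 2 \<le> 2*k \<or> 2*k + 4 \<le> j" by presburger
  then have "real j + 2 \<le> 2 * real k \<or> 2 * real k + 4 \<le> real j" by linarith
  then have "1 \<le> \<bar>t - real j / 2\<bar>" using t by auto
  then show ?thesis using True by (simp add: ref_basis_def nodal_shape_eq_0)
next
  case False
  moreover have "j \<noteq> 2*k + 1" using j by auto
  ultimately have "j + 1 \<le> 2*k \<or> 2*k + 3 \<le> j" by presburger
  then have "real j + 1 \<le> 2 * real k \<or> 2 * real k + 3 \<le> real j" by linarith
  then have "1/2 \<le> \<bar>t - real j / 2\<bar>" using t by auto
  then show ?thesis using False by (simp add: ref_basis_def bubble_shape_eq_0)
qed

lemma sum_ref_basis:
  assumes M: "1 \<le> M" and t: "0 \<le> t" "t \<le> real M"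
  shows "(\<Sum>j\<le>2*M. ref_basis j t) = 1"
proof -
  obtain k :: nat where k: "k < M" "real k \<le> t" "t \<le> real k + 1"
  proof (cases "t < real M")
    case True
    then show ?thesis
      using that[of "nat \<lfloor>t\<rfloor>"] t by linarith
  next
    case False
    then show ?thesis using that[of "M - 1"] M t by (auto simp: of_nat_diff)
  qed
  let ?S = "{2*k, 2*k+1, 2*k+2}"
  have "(\<Sum>j\<le>2*M. ref_basis j t) = (\<Sum>j\<in>?S. ref_basis j t)"
    using k ref_basis_eq_0[OF k(2,3)] by (intro sum.mono_neutral_right) auto
  also have "\<dots> = nodal_shape (t - k) + bubble_shape (t - (k + 1/2)) + nodal_shape (t - (k + 1))"
  proof -
    have "ref_basis (2*k+1) t = bubble_shape (t - real (2*k+1) / 2)" by (simp add: ref_basis_def)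
    also have "real (2*k+1) / 2 = k + 1/2" by simp
    finally have "ref_basis (2*k+1) t = bubble_shape (t - (k + 1/2))" .
    moreover have "ref_basis (2*k+2) t = nodal_shape (t - (k + 1))"
      using ref_basis_even_eq[of "k + 1" t] by (simp add: algebra_simps)
    ultimately show ?thesis by (simp add: ref_basis_even_eq)
  qed
  also have "\<dots> = quad_profile (t - k) + (1 - 4 * (t - k - 1/2)\<^sup>2) + quad_profile (k + 1 - t)"
  proof -
    have "\<bar>t - k - 1/2\<bar> \<le> 1/2" unfolding abs_le_iff using k by linarith
    moreover have "\<bar>t - (k + 1)\<bar> = k + 1 - t" using k by simp
    ultimately show ?thesis using k by (simp add: nodal_shape_def bubble_shape_def algebra_simps)
  qed
  also have "\<dots> = 1"
    by (simp add: quad_profile_def power2_eq_square algebra_simps)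
  finally show ?thesis .
qed

lemma phi_affine_eq_ref_basis:
  assumes ab: "a < b" and M: "1 \<le> M" and t: "0 \<le> t" "t \<le> real M"
  defines "h \<equiv> (b - a) / real M"
  shows "phi a b M j (a + t * h) = ref_basis j t"
proof -
  have hpos: "0 < h" using ab M by (simp add: h_def)
  have "real M * h = b - a" using M by (simp add: h_def)
  then have y: "a \<le> a + t * h" "a + t * h \<le> b"
    using t hpos mult_right_mono[OF t(2), of h] by auto
  have X: "xgrid a b M k = a + real k / 2 * h" for k
    by (simp add: xgrid_def h_def)
  have le: "(a + c * h \<le> a + t * h) = (c \<le> t)" "(a + t * h \<le> a + c * h) = (t \<le> c)" for c
    using hpos by simp_all
  have dv: "(a + t * h - (a + c * h)) / h = t - c"
    "((a + c * h) - (a + t * h)) / h = c - t"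
    "(2 * (a + t * h) - ((a + c * h) + (a + d * h))) / h = 2 * t - c - d"
    "((a + c * h) + (a + d * h) - 2 * (a + t * h)) / h = c + d - 2 * t"
    "4 * (a + t * h - (a + c * h)) * ((a + d * h) - (a + t * h)) / h\<^sup>2 = 4 * (t - c) * (d - t)"
    for c d using hpos by (simp_all add: field_simps power2_eq_square)
  note reduce = y[THEN eqTrueI] le dv
  show ?thesis
  proof (cases "even j")
    case True
    then obtain l where l: "j = 2 * l" by blast
    show ?thesis
    proof (cases "l = 0")
      case True
      then show ?thesis using t M unfolding phi_def Let_def h_def[symmetric] X l
        by (simp only: reduce)
          (auto simp: ref_basis_def nodal_shape_def quad_profile_def field_simps)
    next
      case False
      then have "real (2 * l - 2) / 2 = real l - 1" by (simp add: of_nat_diff)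
      then show ?thesis using t M False unfolding phi_def Let_def h_def[symmetric] X l
        by (simp only: reduce)
          (auto simp: ref_basis_def nodal_shape_def quad_profile_def field_simps)
    qed
  next
    case False
    then obtain l where l: "j = 2 * l + 1" by (metis oddE)
    show ?thesis using t M unfolding phi_def Let_def h_def[symmetric] X l
      by (simp only: reduce)
        (auto simp: ref_basis_def bubble_shape_def field_simps power2_eq_square)
  qed
qed

section \<open>Moments of the reference basis\<close>

lemma integral_eq_sum_unit_intervals:
  fixes f :: "real \<Rightarrow> real"
  assumes "f integrable_on {0..real M}"
  shows "integral {0..real M} f = (\<Sum>k<M. integral {real k..real k + 1} f)"
  using assms
proof (induction M)
  case (Suc M)
  have "f integrable_on {0..real M}"
    using Suc.prems by (rule integrable_on_subinterval) auto
  then show ?case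
    using Suc Henstock_Kurzweil_Integration.integral_combine
        [where a = 0 and c = "real M" and b = "real (Suc M)" and f = f]
    by (simp add: ac_simps)
qed simp

lemma nodal_shape_minus [simp]: "nodal_shape (- s) = nodal_shape s"
  by (simp add: nodal_shape_def)

lemma half_integer_cases:
  fixes n :: int
  shows "real_of_int n / 2 \<le> 0 \<or> real_of_int n / 2 = 1/2 \<or> 1 \<le> real_of_int n / 2"
proof -
  have "n \<le> 0 \<or> n = 1 \<or> 2 \<le> n" by linarith
  then show ?thesis by auto
qed

lemma nodal_right_element:
  assumes "0 < \<gamma>" "\<gamma> < 1"
  shows "((\<lambda>t. nodal_shape (t - c) * ws_kernel \<gamma> (v - t))
           has_integral profile_moment \<gamma> (v - c)) {c..c + 1}"
proof -
  have I: "((\<lambda>u. quad_profile u * ws_kernel \<gamma> (v - c - u))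
      has_integral profile_moment \<gamma> (v - c)) {0..1}"
    unfolding profile_moment_def
    using quad_profile_mult_ws_kernel_integrable[OF assms] by (rule integrable_integral)
  have "nodal_shape u * ws_kernel \<gamma> (v - c - u) = quad_profile u * ws_kernel \<gamma> (v - c - u)"
    if "u \<in> {0..1}" for u
    using that by (simp add: nodal_shape_def)
  then have "((\<lambda>u. nodal_shape u * ws_kernel \<gamma> (v - c - u))
      has_integral profile_moment \<gamma> (v - c)) {0..1}"
    using I by (rule has_integral_cong[THEN iffD2])
  from has_integral_shift_real_ivl[OF this, of "- c"] show ?thesis by (simp add: add.commute)
qed

lemma nodal_left_element:
  assumes "0 < \<gamma>" "\<gamma> < 1"
  shows "((\<lambda>t. nodal_shape (t - c) * ws_kernel \<gamma> (v - t))
           has_integral profile_moment \<gamma> (c - v)) {c - 1..c}"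
proof -
  have "((\<lambda>t. nodal_shape (t - (- c)) * ws_kernel \<gamma> (- v - t))
      has_integral profile_moment \<gamma> (c - v)) {- c..- c + 1}"
    using nodal_right_element[OF assms, of "- c" "- v"] by simp
  then have "((\<lambda>t. nodal_shape (- t - (- c)) * ws_kernel \<gamma> (- v - (- t)))
      has_integral profile_moment \<gamma> (c - v)) {- (- c + 1)..- (- c)}"
    by (subst has_integral_reflect_real)
  moreover have "nodal_shape (- t - (- c)) = nodal_shape (t - c)"
    and "ws_kernel \<gamma> (- v - (- t)) = ws_kernel \<gamma> (v - t)" for t
    using nodal_shape_minus[of "t - c"] ws_kernel_minus[of \<gamma> "v - t"] by simp_all
  ultimately show ?thesis by simp
qed

definition ref_moment :: "real \<Rightarrow> nat \<Rightarrow> nat \<Rightarrow> real \<Rightarrow> real" where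
  "ref_moment \<gamma> M j v = integral {0..real M} (\<lambda>t. ref_basis j t * ws_kernel \<gamma> (v - t))"

lemma ref_basis_mult_ws_kernel_integrable:
  assumes "0 < \<gamma>" "\<gamma> < 1"
  shows "(\<lambda>t. ref_basis j t * ws_kernel \<gamma> (v - t)) integrable_on {c..d}"
  using assms ref_basis_borel abs_ref_basis_le by (rule bounded_mult_ws_kernel_integrable)

text \<open>Up to translation and reflection, each element integral is a profile moment at a
  half-integer point.\<close>
lemma nodal_element_integral_nonneg:
  assumes \<gamma>: "0 < \<gamma>" "\<gamma> < 1"
  shows "0 \<le> integral {real k..real k + 1}
                (\<lambda>t. nodal_shape (t - real l) * ws_kernel \<gamma> (real i / 2 - t))"
proof -
  let ?f = "\<lambda>t. nodal_shape (t - real l) * ws_kernel \<gamma> (real i / 2 - t)"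
  consider "k = l" | "k + 1 = l" | "k + 1 < l \<or> l < k" by linarith
  then show ?thesis
  proof cases
    case 1
    have "real i / 2 - real l = real_of_int (int i - 2 * int l) / 2" by simp
    then have "0 \<le> profile_moment \<gamma> (real i / 2 - real l)"
      using half_integer_cases[of "int i - 2 * int l"] by (metis profile_moment_nonneg[OF \<gamma>])
    then show ?thesis using integral_unique[OF nodal_right_element[OF \<gamma>]] 1 by simp
  next
    case 2
    have "real l - real i / 2 = real_of_int (2 * int l - int i) / 2" by simp
    then have "0 \<le> profile_moment \<gamma> (real l - real i / 2)"
      using half_integer_cases[of "2 * int l - int i"] by (metis profile_moment_nonneg[OF \<gamma>])
    moreover have "{real k..real k + 1} = {real l - 1..real l}" using 2 by auto
    ultimately show ?thesis
      using integral_unique[OF nodal_left_element[OF \<gamma>, of "real l" "real i / 2"]] by simp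
  next
    case 3
    have zero: "?f t = 0" if "t \<in> {real k..real k + 1}" for t
    proof -
      have "1 \<le> \<bar>t - real l\<bar>" using 3 that by auto
      then show ?thesis by (simp add: nodal_shape_eq_0)
    qed
    have "integral {real k..real k + 1} ?f = integral {real k..real k + 1} (\<lambda>_. 0)"
      by (rule integral_cong) (rule zero)
    then show ?thesis by simp
  qed
qed

lemma nodal_moment_ge_element:
  assumes \<gamma>: "0 < \<gamma>" "\<gamma> < 1" and k: "k < M"
  shows "integral {real k..real k + 1}
             (\<lambda>t. nodal_shape (t - real l) * ws_kernel \<gamma> (real i / 2 - t))
           \<le> ref_moment \<gamma> M (2 * l) (real i / 2)"
proof -
  have "ref_moment \<gamma> M (2 * l) (real i / 2)
      = (\<Sum>k<M. integral {real k..real k + 1}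
                   (\<lambda>t. nodal_shape (t - real l) * ws_kernel \<gamma> (real i / 2 - t)))"
    unfolding ref_moment_def ref_basis_even_eq
    by (rule integral_eq_sum_unit_intervals)
      (use ref_basis_mult_ws_kernel_integrable[OF \<gamma>, of "2 * l"] in \<open>simp add: ref_basis_even_eq\<close>)
  then show ?thesis
    using k by (auto intro: member_le_sum nodal_element_integral_nonneg[OF \<gamma>])
qed

lemma ref_moment_nonneg:
  assumes \<gamma>: "0 < \<gamma>" "\<gamma> < 1"
  shows "0 \<le> ref_moment \<gamma> M j (real i / 2)"
proof (cases "even j")
  case True
  then obtain l where "j = 2 * l" by blast
  then show ?thesis
    using nodal_moment_ge_element[OF \<gamma>, of 0 M l i] nodal_element_integral_nonneg[OF \<gamma>, of 0 l i]
    by (cases "M = 0") (auto simp: ref_moment_def)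
next
  case False
  then show ?thesis
    unfolding ref_moment_def
    using ref_basis_mult_ws_kernel_integrable[OF \<gamma>]
    by (intro integral_nonneg) (auto simp: ref_basis_odd_nonneg ws_kernel_nonneg)
qed

lemma ref_moment_boundary_lower:
  assumes \<gamma>: "0 < \<gamma>" "\<gamma> < 1" and M: "2 \<le> M" and i: "1 \<le> i" "i \<le> 2 * M - 1"
  shows "profile_moment_const \<gamma> * ws_kernel \<gamma> (real M)
           \<le> ref_moment \<gamma> M 0 (real i / 2) + ref_moment \<gamma> M (2 * M) (real i / 2)"
proof (cases "i = 1")
  case False
  then have "1 \<le> real i / 2 - real 0" "real i / 2 - real 0 \<le> real M" using i by auto
  from profile_moment_lower[OF \<gamma> this]
  have "profile_moment_const \<gamma> * ws_kernel \<gamma> (real M) \<le> ref_moment \<gamma> M (2 * 0) (real i / 2)"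
    using nodal_moment_ge_element[OF \<gamma>, of 0 M 0 i] M
      integral_unique[OF nodal_right_element[OF \<gamma>, of 0 "real i / 2"]]
    by simp
  then show ?thesis using ref_moment_nonneg[OF \<gamma>, of M "2 * M" i] by simp
next
  case True
  have "1 \<le> real M - real i / 2" "real M - real i / 2 \<le> real M" using True M by auto
  from profile_moment_lower[OF \<gamma> this]
  have "profile_moment_const \<gamma> * ws_kernel \<gamma> (real M) \<le> ref_moment \<gamma> M (2 * M) (real i / 2)"
    using nodal_moment_ge_element[OF \<gamma>, of "M - 1" M M i] M
      integral_unique[OF nodal_left_element[OF \<gamma>, of "real M" "real i / 2"]]
    by (simp add: of_nat_diff)
  then show ?thesis using ref_moment_nonneg[OF \<gamma>, of M 0 i] by simp
qed

lemma sum_ref_moment: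
  assumes \<gamma>: "0 < \<gamma>" "\<gamma> < 1" and M: "1 \<le> M"
  shows "(\<Sum>j\<le>2*M. ref_moment \<gamma> M j v) = integral {0..real M} (\<lambda>t. ws_kernel \<gamma> (v - t))"
proof -
  have "(\<Sum>j\<le>2*M. ref_moment \<gamma> M j v)
      = integral {0..real M} (\<lambda>t. \<Sum>j\<le>2*M. ref_basis j t * ws_kernel \<gamma> (v - t))"
    unfolding ref_moment_def using ref_basis_mult_ws_kernel_integrable[OF \<gamma>]
    by (intro integral_sum[symmetric]) auto
  also have "\<dots> = integral {0..real M} (\<lambda>t. ws_kernel \<gamma> (v - t))"
    using sum_ref_basis[OF M] by (intro integral_cong) (simp add: sum_distrib_right[symmetric])
  finally show ?thesis .
qed

section \<open>Collocation entries in reference coordinates\<close>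

lemma has_integral_affine_rescale:
  fixes f :: "real \<Rightarrow> real"
  assumes h: "0 < h" and f: "(f has_integral I) {0..L}"
  shows "((\<lambda>y. f ((y - a) / h)) has_integral h * I) {a..a + L * h}"
proof -
  have "((\<lambda>y. f ((1 / h) *\<^sub>R y + - a / h)) has_integral I /\<^sub>R (1 / h) ^ DIM(real))
      (cbox ((0 - - a / h) /\<^sub>R (1 / h)) ((L - - a / h) /\<^sub>R (1 / h)))"
    using has_integral_affinity_iff
        [where m = "1 / h" and f = f and I = I and c = "- a / h" and a = 0 and b = L] h f
    by simp
  moreover have "(1 / h) *\<^sub>R y + - a / h = (y - a) / h" for y by (simp add: diff_divide_distrib)
  moreover have "(L - - a / h) /\<^sub>R (1 / h) = a + L * h" using h by (simp add: field_simps)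
  ultimately show ?thesis using h by (simp add: mult.commute)
qed

lemma integral_collocation_rescale:
  fixes g G :: "real \<Rightarrow> real"
  assumes ab: "a < b" and M: "1 \<le> M"
    and g: "(\<lambda>t. g t * ws_kernel \<gamma> (real i / 2 - t)) integrable_on {0..real M}"
    and G: "\<And>y. y \<in> {a..b} \<Longrightarrow> G y = g ((y - a) / ((b - a) / real M))"
  shows "integral {a..b} (\<lambda>y. G y / \<bar>xgrid a b M i - y\<bar> powr \<gamma>)
           = ((b - a) / real M) powr (1 - \<gamma>)
               * integral {0..real M} (\<lambda>t. g t * ws_kernel \<gamma> (real i / 2 - t))"
proof -
  define h where "h = (b - a) / real M"
  define F where "F t = g t * ws_kernel \<gamma> (real i / 2 - t)" for t
  have h: "0 < h" using ab M by (simp add: h_def)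
  have b: "a + real M * h = b" using M by (simp add: h_def)
  have "((\<lambda>y. F ((y - a) / h)) has_integral h * integral {0..real M} F) {a..b}"
    using has_integral_affine_rescale[OF h integrable_integral[OF g[folded F_def]], of a] b by simp
  then have I: "((\<lambda>y. h powr (- \<gamma>) * F ((y - a) / h))
      has_integral h powr (- \<gamma>) * (h * integral {0..real M} F)) {a..b}"
    by (rule has_integral_mult_right)
  have eq: "G y / \<bar>xgrid a b M i - y\<bar> powr \<gamma> = h powr (- \<gamma>) * F ((y - a) / h)"
    if "y \<in> {a..b}" for y
  proof -
    have "xgrid a b M i = a + real i / 2 * h" by (simp add: xgrid_def h_def)
    then have "xgrid a b M i - y = h * (real i / 2 - (y - a) / h)"
      using h by (simp add: field_simps)
    then have K: "1 / \<bar>xgrid a b M i - y\<bar> powr \<gamma>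
        = h powr (- \<gamma>) * ws_kernel \<gamma> (real i / 2 - (y - a) / h)"
      using h ws_kernel_mult[of \<gamma> h] by (simp add: ws_kernel_def powr_minus_divide)
    have "G y / \<bar>xgrid a b M i - y\<bar> powr \<gamma> = G y * (1 / \<bar>xgrid a b M i - y\<bar> powr \<gamma>)"
      by simp
    also have "\<dots> = h powr (- \<gamma>) * F ((y - a) / h)"
      unfolding K G[OF that, folded h_def] F_def by (rule mult.left_commute)
    finally show ?thesis .
  qed
  have "((\<lambda>y. G y / \<bar>xgrid a b M i - y\<bar> powr \<gamma>)
      has_integral h powr (- \<gamma>) * (h * integral {0..real M} F)) {a..b}"
    using eq I by (rule has_integral_cong[THEN iffD2])
  moreover have "h powr (- \<gamma>) * h = h powr (1 - \<gamma>)"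
    using h by (simp add: powr_diff powr_minus_divide)
  ultimately show ?thesis
    unfolding h_def[symmetric] F_def by (simp add: integral_unique mult.assoc)
qed

lemma gcoef_eq_ref_moment:
  assumes ab: "a < b" and M: "1 \<le> M" and \<gamma>: "0 < \<gamma>" "\<gamma> < 1"
  shows "gcoef a b \<gamma> M i j = ((b - a) / real M) powr (1 - \<gamma>) * ref_moment \<gamma> M j (real i / 2)"
  unfolding gcoef_def ref_moment_def
proof (rule integral_collocation_rescale[OF ab M ref_basis_mult_ws_kernel_integrable[OF \<gamma>]])
  fix y assume y: "y \<in> {a..b}"
  define h where "h = (b - a) / real M"
  have h: "0 < h" "real M * h = b - a" using ab M by (simp_all add: h_def)
  have "0 \<le> (y - a) / h" "(y - a) / h \<le> real M" "y = a + (y - a) / h * h"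
    using y h by (auto simp: divide_simps)
  then show "phi a b M j y = ref_basis j ((y - a) / ((b - a) / real M))"
    using phi_affine_eq_ref_basis[OF ab M] unfolding h_def by metis
qed

lemma dcoef_eq_kernel_integral:
  assumes ab: "a < b" and M: "1 \<le> M" and \<gamma>: "0 < \<gamma>" "\<gamma> < 1"
  shows "dcoef a b \<gamma> M i
           = ((b - a) / real M) powr (1 - \<gamma>) * integral {0..real M} (\<lambda>t. ws_kernel \<gamma> (real i / 2 - t))"
  using integral_collocation_rescale[OF ab M, of "\<lambda>_. 1" \<gamma> i "\<lambda>_. 1"] ws_kernel_integrable[OF \<gamma>]
  by (simp add: dcoef_def)

section \<open>Diagonally dominant matrices\<close>

lemma norm_inf_mat_le:
  assumes "0 < dim_row A" "\<And>r. r < dim_row A \<Longrightarrow> (\<Sum>c<dim_col A. \<bar>A $$ (r, c)\<bar>) \<le> R"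
  shows "norm_inf_mat A \<le> R"
  unfolding norm_inf_mat_def using assms by (subst Max_le_iff) auto

lemma norm_inf_mat_nonneg:
  assumes "0 < dim_row A"
  shows "0 \<le> norm_inf_mat A"
proof -
  have "(\<Sum>c<dim_col A. \<bar>A $$ (0, c)\<bar>) \<le> norm_inf_mat A"
    unfolding norm_inf_mat_def using assms by (intro Max_ge) auto
  moreover have "0 \<le> (\<Sum>c<dim_col A. \<bar>A $$ (0, c)\<bar>)" by (intro sum_nonneg) auto
  ultimately show ?thesis by linarith
qed

lemma mult_mat_vec_index_sum:
  assumes "A \<in> carrier_mat n n" "v \<in> carrier_vec n" "r < n"
  shows "(A *\<^sub>v v) $ r = (\<Sum>c<n. A $$ (r, c) * v $ c)"
  using assms by (auto simp: scalar_prod_def atLeast0LessThan intro!: sum.cong)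

text \<open>At a component of \<open>v\<close> of maximal modulus the corresponding entry of \<open>A v\<close> is at least
  \<open>\<delta>\<close> times as large.\<close>
lemma diag_dominant_abs_vec_le:
  fixes A :: "real mat"
  assumes A: "A \<in> carrier_mat n n" and v: "v \<in> carrier_vec n" and \<delta>: "0 < \<delta>"
    and dom: "\<And>r. r < n \<Longrightarrow> (\<Sum>c\<in>{..<n} - {r}. \<bar>A $$ (r, c)\<bar>) + \<delta> \<le> \<bar>A $$ (r, r)\<bar>"
    and bound: "\<And>r. r < n \<Longrightarrow> \<bar>(A *\<^sub>v v) $ r\<bar> \<le> \<beta>"
    and k: "k < n"
  shows "\<bar>v $ k\<bar> \<le> \<beta> / \<delta>"
proof -
  let ?S = "(\<lambda>c. \<bar>v $ c\<bar>) ` {..<n}"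
  have S: "finite ?S" "?S \<noteq> {}" using k by auto
  obtain m where m: "m < n" and "\<bar>v $ m\<bar> = Max ?S" using Max_in[OF S] by auto
  then have max: "\<bar>v $ c\<bar> \<le> \<bar>v $ m\<bar>" if "c < n" for c using S that by auto
  let ?off = "\<Sum>c\<in>{..<n} - {m}. A $$ (m, c) * v $ c"
  have "\<bar>?off\<bar> \<le> (\<Sum>c\<in>{..<n} - {m}. \<bar>A $$ (m, c)\<bar>) * \<bar>v $ m\<bar>"
    unfolding sum_distrib_right
    by (rule order_trans[OF sum_abs sum_mono]) (auto simp: abs_mult intro: mult_left_mono max)
  moreover have "(A *\<^sub>v v) $ m = A $$ (m, m) * v $ m + ?off"
    unfolding mult_mat_vec_index_sum[OF A v m] using m by (subst sum.remove[of _ m]) auto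
  moreover have "\<delta> * \<bar>v $ m\<bar> \<le> (\<bar>A $$ (m, m)\<bar> - (\<Sum>c\<in>{..<n} - {m}. \<bar>A $$ (m, c)\<bar>)) * \<bar>v $ m\<bar>"
    using dom[OF m] by (intro mult_right_mono) auto
  ultimately have "\<delta> * \<bar>v $ m\<bar> \<le> \<bar>(A *\<^sub>v v) $ m\<bar>"
    by (simp add: abs_mult left_diff_distrib)
  then have "\<bar>v $ m\<bar> \<le> \<beta> / \<delta>"
    using bound[OF m] \<delta> by (simp add: field_simps)
  then show ?thesis using max[OF k] by linarith
qed

lemma inverse_mat_right_inverse:
  fixes A :: "real mat"
  assumes A: "A \<in> carrier_mat n n" and det: "det A \<noteq> 0"
  shows "inverse_mat A \<in> carrier_mat n n" "A * inverse_mat A = 1\<^sub>m n"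
proof -
  have "\<exists>B. B \<in> carrier_mat n n \<and> A * B = 1\<^sub>m n \<and> B * A = 1\<^sub>m n"
    using det_non_zero_imp_unit[OF A det, of "()"] unfolding Units_def ring_mat_def by auto
  then have "inverse_mat A \<in> carrier_mat n n \<and> A * inverse_mat A = 1\<^sub>m n"
    unfolding inverse_mat_def using A by (metis (mono_tags, lifting) carrier_matD(1) someI_ex)
  then show "inverse_mat A \<in> carrier_mat n n" "A * inverse_mat A = 1\<^sub>m n" by auto
qed

lemma norm_inf_inverse_le_of_diag_dominant:
  fixes A :: "real mat"
  assumes A: "A \<in> carrier_mat n n" and n: "0 < n" and \<delta>: "0 < \<delta>"
    and dom: "\<And>r. r < n \<Longrightarrow> (\<Sum>c\<in>{..<n} - {r}. \<bar>A $$ (r, c)\<bar>) + \<delta> \<le> \<bar>A $$ (r, r)\<bar>"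
  shows "norm_inf_mat (inverse_mat A) \<le> 1 / \<delta>"
proof -
  have "det A \<noteq> 0"
  proof
    assume "det A = 0"
    then obtain v where v: "v \<in> carrier_vec n" "v \<noteq> 0\<^sub>v n" "A *\<^sub>v v = 0\<^sub>v n"
      using det_0_iff_vec_prod_zero_field[OF A] by auto
    then have "\<bar>v $ k\<bar> \<le> 0 / \<delta>" if "k < n" for k
      using diag_dominant_abs_vec_le[OF A v(1) \<delta> dom _ that, of 0] by auto
    then have "v = 0\<^sub>v n" using v(1) by (intro eq_vecI) auto
    with v(2) show False by simp
  qed
  note B = inverse_mat_right_inverse[OF A this]
  define B where "B = inverse_mat A"
  have row: "(\<Sum>c<n. \<bar>B $$ (r, c)\<bar>) \<le> 1 / \<delta>" if r: "r < n" for r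
  proof -
    text \<open>Apply the bound to the column combination of \<open>B\<close> with the signs of row \<open>r\<close>.\<close>
    define y where "y = vec n (\<lambda>c. sgn (B $$ (r, c)))"
    have y: "y \<in> carrier_vec n" by (simp add: y_def)
    have "A *\<^sub>v (B *\<^sub>v y) = y"
      using A B y unfolding B_def by (metis assoc_mult_mat_vec one_mult_mat_vec)
    then have "\<bar>(B *\<^sub>v y) $ r\<bar> \<le> 1 / \<delta>"
      using diag_dominant_abs_vec_le[OF A _ \<delta> dom _ r, of "B *\<^sub>v y" 1] B y
      by (auto simp: B_def y_def abs_sgn_eq)
    moreover have "(B *\<^sub>v y) $ r = (\<Sum>c<n. B $$ (r, c) * sgn (B $$ (r, c)))"
      using mult_mat_vec_index_sum[OF B(1)[folded B_def] y r] by (simp add: y_def)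
    moreover have "\<dots> = (\<Sum>c<n. \<bar>B $$ (r, c)\<bar>)"
      by (rule sum.cong) (auto simp: sgn_if)
    ultimately show ?thesis by simp
  qed
  show ?thesis
    unfolding B_def[symmetric] using B(1) n row by (intro norm_inf_mat_le) (auto simp: B_def)
qed

lemma cond_inf_le_of_diag_dominant:
  fixes A :: "real mat"
  assumes A: "A \<in> carrier_mat n n" and n: "0 < n" and \<delta>: "0 < \<delta>"
    and dom: "\<And>r. r < n \<Longrightarrow> (\<Sum>c\<in>{..<n} - {r}. \<bar>A $$ (r, c)\<bar>) + \<delta> \<le> \<bar>A $$ (r, r)\<bar>"
    and rows: "\<And>r. r < n \<Longrightarrow> (\<Sum>c<n. \<bar>A $$ (r, c)\<bar>) \<le> R"
  shows "cond_inf A \<le> R / \<delta>"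
proof -
  have A_le: "norm_inf_mat A \<le> R" and A_nonneg: "0 \<le> norm_inf_mat A"
    using A n rows by (auto intro: norm_inf_mat_le norm_inf_mat_nonneg)
  have "cond_inf A \<le> norm_inf_mat A * (1 / \<delta>)"
    unfolding cond_inf_def using norm_inf_inverse_le_of_diag_dominant[OF A n \<delta> dom] A_nonneg
    by (rule mult_left_mono)
  also have "\<dots> \<le> R * (1 / \<delta>)"
    using A_le \<delta> by (intro mult_right_mono) auto
  finally show ?thesis by simp
qed

section \<open>The condition number of the collocation matrix\<close>

lemma diag_dominant_row_of_partition:
  fixes g :: "nat \<Rightarrow> real"
  assumes g: "\<And>j. j \<le> Suc n \<Longrightarrow> 0 \<le> g j" and r: "r < n"
  defines "A \<equiv> \<lambda>c. (if r = c then (\<Sum>j\<le>Suc n. g j) else 0) - g (Suc c)"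
  shows "(\<Sum>c\<in>{..<n} - {r}. \<bar>A c\<bar>) + (g 0 + g (Suc n)) = \<bar>A r\<bar>"
    and "(\<Sum>c<n. \<bar>A c\<bar>) \<le> 2 * (\<Sum>j\<le>Suc n. g j)"
proof -
  let ?off = "\<Sum>c\<in>{..<n} - {r}. g (Suc c)"
  have off_nonneg: "0 \<le> ?off" using g by (intro sum_nonneg) auto
  have "(\<Sum>j\<le>Suc n. g j) = g 0 + ((\<Sum>c<n. g (Suc c)) + g (Suc n))"
    unfolding sum.atMost_Suc_shift by (simp add: lessThan_Suc_atMost[symmetric])
  also have "(\<Sum>c<n. g (Suc c)) = g (Suc r) + ?off"
    using r by (simp add: sum.remove)
  finally have sum_g: "(\<Sum>j\<le>Suc n. g j) = g 0 + g (Suc n) + g (Suc r) + ?off" by simp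
  then have Ar: "A r = g 0 + g (Suc n) + ?off" by (simp add: A_def)
  have off: "(\<Sum>c\<in>{..<n} - {r}. \<bar>A c\<bar>) = ?off"
    using g by (intro sum.cong) (auto simp: A_def)
  show "(\<Sum>c\<in>{..<n} - {r}. \<bar>A c\<bar>) + (g 0 + g (Suc n)) = \<bar>A r\<bar>"
    using Ar off g[of 0] g[of "Suc n"] off_nonneg by simp
  have "(\<Sum>c<n. \<bar>A c\<bar>) = \<bar>A r\<bar> + (\<Sum>c\<in>{..<n} - {r}. \<bar>A c\<bar>)"
    using r by (simp add: sum.remove)
  then show "(\<Sum>c<n. \<bar>A c\<bar>) \<le> 2 * (\<Sum>j\<le>Suc n. g j)"
    using Ar off sum_g g[of 0] g[of "Suc n"] g[of "Suc r"] off_nonneg r by simp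
qed

lemma colloc_mat_row_bounds:
  assumes ab: "a < b" and \<gamma>: "0 < \<gamma>" "\<gamma> < 1" and M: "2 \<le> M" and r: "r < 2 * M - 1"
  defines "s \<equiv> ((b - a) / real M) powr (1 - \<gamma>)"
  shows "(\<Sum>c\<in>{..<2 * M - 1} - {r}. \<bar>colloc_mat a b \<gamma> M $$ (r, c)\<bar>)
           + s * (profile_moment_const \<gamma> * ws_kernel \<gamma> (real M)) \<le> \<bar>colloc_mat a b \<gamma> M $$ (r, r)\<bar>"
    and "(\<Sum>c<2 * M - 1. \<bar>colloc_mat a b \<gamma> M $$ (r, c)\<bar>)
           \<le> 2 * (s * (2 * real M powr (1 - \<gamma>) / (1 - \<gamma>)))"
proof -
  define n where "n = 2 * M - 1"
  define g where "g = gcoef a b \<gamma> M (r + 1)"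
  have M1: "1 \<le> M" and n: "Suc n = 2 * M" using M by (auto simp: n_def)
  have s: "0 \<le> s" by (simp add: s_def)
  have g_eq: "g j = s * ref_moment \<gamma> M j (real (r + 1) / 2)" for j
    using gcoef_eq_ref_moment[OF ab M1 \<gamma>] by (simp add: g_def s_def)
  have g_nonneg: "0 \<le> g j" for j
    unfolding g_eq using s ref_moment_nonneg[OF \<gamma>, of M j "r + 1"] by simp
  have d: "dcoef a b \<gamma> M (r + 1) = (\<Sum>j\<le>Suc n. g j)"
    unfolding n g_eq dcoef_eq_kernel_integral[OF ab M1 \<gamma>] sum_distrib_left[symmetric]
      sum_ref_moment[OF \<gamma> M1] s_def ..
  define A where "A c = (if r = c then (\<Sum>j\<le>Suc n. g j) else 0) - g (Suc c)" for c
  have entry: "colloc_mat a b \<gamma> M $$ (r, c) = A c" if "c < n" for c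
    using that r d by (auto simp: colloc_mat_def A_def g_def n_def)
  have off: "(\<Sum>c\<in>{..<n} - {r}. \<bar>colloc_mat a b \<gamma> M $$ (r, c)\<bar>) = (\<Sum>c\<in>{..<n} - {r}. \<bar>A c\<bar>)"
    and full: "(\<Sum>c<n. \<bar>colloc_mat a b \<gamma> M $$ (r, c)\<bar>) = (\<Sum>c<n. \<bar>A c\<bar>)"
    using entry by (auto intro: sum.cong)
  note row = diag_dominant_row_of_partition[of n g r, OF g_nonneg r[folded n_def], folded A_def]
  have "s * (profile_moment_const \<gamma> * ws_kernel \<gamma> (real M)) \<le> g 0 + g (Suc n)"
    unfolding n g_eq distrib_left[symmetric] using s r M
    by (intro mult_left_mono ref_moment_boundary_lower[OF \<gamma> M]) auto
  then show "(\<Sum>c\<in>{..<2 * M - 1} - {r}. \<bar>colloc_mat a b \<gamma> M $$ (r, c)\<bar>)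
      + s * (profile_moment_const \<gamma> * ws_kernel \<gamma> (real M)) \<le> \<bar>colloc_mat a b \<gamma> M $$ (r, r)\<bar>"
    using row(1) off entry[of r] r unfolding n_def[symmetric] by simp
  have "(\<Sum>j\<le>Suc n. g j) \<le> s * (2 * real M powr (1 - \<gamma>) / (1 - \<gamma>))"
    unfolding d[symmetric] dcoef_eq_kernel_integral[OF ab M1 \<gamma>] s_def[symmetric]
    using ws_kernel_integral_le[OF \<gamma>, of 0 "real (r + 1) / 2" "real M"] r s
    by (intro mult_left_mono) auto
  then show "(\<Sum>c<2 * M - 1. \<bar>colloc_mat a b \<gamma> M $$ (r, c)\<bar>)
      \<le> 2 * (s * (2 * real M powr (1 - \<gamma>) / (1 - \<gamma>)))"
    using row(2) full unfolding n_def[symmetric] by simp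
qed

theorem lemma3p5:
  fixes a b \<gamma> :: real
  assumes "a < b" and "0 < \<gamma>" and "\<gamma> < 1"
  shows "\<exists>C. \<forall>M::nat. M \<ge> 2 \<longrightarrow> cond_inf (colloc_mat a b \<gamma> M) \<le> C * real M"
proof (intro exI allI impI)
  note ab = assms(1) and \<gamma> = assms(2,3)
  fix M :: nat
  assume M: "2 \<le> M"
  define s where "s = ((b - a) / real M) powr (1 - \<gamma>)"
  define \<kappa> where "\<kappa> = profile_moment_const \<gamma>"
  have s: "0 < s" using ab M by (simp add: s_def)
  have \<kappa>: "0 < \<kappa>" using profile_moment_const_pos[OF \<gamma>] by (simp add: \<kappa>_def)
  have "cond_inf (colloc_mat a b \<gamma> M)
      \<le> 2 * (s * (2 * real M powr (1 - \<gamma>) / (1 - \<gamma>))) / (s * (\<kappa> * ws_kernel \<gamma> (real M)))"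
    using colloc_mat_row_bounds[OF ab \<gamma> M] M s \<kappa>
    by (intro cond_inf_le_of_diag_dominant[where n = "2 * M - 1"])
      (auto simp: colloc_mat_def \<kappa>_def s_def ws_kernel_def)
  also have "\<dots> = 4 / ((1 - \<gamma>) * \<kappa>) * real M"
    using s \<kappa> \<gamma> M by (simp add: ws_kernel_def powr_diff field_simps)
  finally show "cond_inf (colloc_mat a b \<gamma> M) \<le> 4 / ((1 - \<gamma>) * profile_moment_const \<gamma>) * real M"
    by (simp add: \<kappa>_def)
qed

end
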